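(* Let $0\le t\le u\le T$, $X\in L^2(\mathcal{F}_u)$, $\beta\ge0$. For $q\in[0,1]$ and $\alpha\ge-1$ set $\rho^{q,\alpha}_{tu}(X):=\ln_qE[\exp_q((X+\beta)^-+\alpha)\mid\mathcal{F}_t]$ (with values in $(-\infty,+\infty]$). Then for fixed $\alpha\ge-1$ the map $q\mapsto\rho^{q,\alpha}_{tu}(X)$ is non-decreasing on $[0,1]$, and for fixed $q$ the map $\alpha\mapsto\rho^{q,\alpha}_{tu}(X)$ is non-decreasing. In particular, for $q\in(0,1)$ and $-1\le\alpha_0\le\alpha_q\le\alpha_1$, $$E[(X+\beta)^-+\alpha_0\mid\mathcal{F}_t]=\rho^{0,\alpha_0}_{tu}(X)\le\rho^{q,\alpha_q}_{tu}(X)\le\rho^{1,\alpha_1}_{tu}(X)=\ln E[\exp((X+\beta)^-+\alpha_1)\mid\mathcal{F}_t].$$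
   Context: $(\mathcal{F}_t)_{t\in[0,T]}$ is the $P$-augmented filtration of a $d$-dimensional Brownian motion. For $q\in[0,1)$: $\exp_q(x):=[1+(1-q)x]^{1/(1-q)}$ for $x\ge\frac1{q-1}$ and $\ln_q(x):=\frac{x^{1-q}-1}{1-q}$ for $x\ge 0$, with $\ln_q(+\infty):=+\infty$; for $q=1$, $\exp_1=\exp$ and $\ln_1=\ln$. For $q=0$: $\exp_0(x)=1+x$, $\ln_0(x)=x-1$. Since $(X+\beta)^-+\alpha\ge-1\ge\frac1{q-1}$, the expressions are well-defined, with conditional expectations of non-negative variables taken in $[0,\infty]$. $x^-:=\max(-x,0)$. *)

theory Defs
  imports "HOL-Probability.Probability"
begin

text \<open>q-exponential, defined for x \<ge> 1/(q-1) (only used with q in [0,1] and x \<ge> -1).\<close>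
definition expq :: "real \<Rightarrow> real \<Rightarrow> real" where
  "expq q x = (if q = 1 then exp x else (1 + (1 - q) * x) powr (1 / (1 - q)))"

definition ln_ennreal :: "ennreal \<Rightarrow> ereal" where
  "ln_ennreal y = (if y = \<infinity> then \<infinity> else if y = 0 then -\<infinity> else ereal (ln (enn2real y)))"

definition lnq :: "real \<Rightarrow> ennreal \<Rightarrow> ereal" where
  "lnq q y = (if q = 1 then ln_ennreal y
              else if y = \<infinity> then \<infinity>
              else ereal ((enn2real y powr (1 - q) - 1) / (1 - q)))"

text \<open>W i s (i < d, 0 \<le> s \<le> T) are the components of a standard d-dimensional Brownian motion
  on [0,T] w.r.t. the probability space M.\<close>
definition brownian_motion :: "'a measure \<Rightarrow> nat \<Rightarrow> real \<Rightarrow> (nat \<Rightarrow> real \<Rightarrow> 'a \<Rightarrow> real) \<Rightarrow> bool" where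
  "brownian_motion M d T W \<longleftrightarrow>
     prob_space M \<and>
     (\<forall>i<d. \<forall>s\<in>{0..T}. W i s \<in> borel_measurable M) \<and>
     (AE \<omega> in M. \<forall>i<d. W i 0 \<omega> = 0 \<and> continuous_on {0..T} (\<lambda>s. W i s \<omega>)) \<and>
     (\<forall>(n::nat) (ts::nat \<Rightarrow> real). ts 0 = 0 \<longrightarrow> (\<forall>k<n. ts k < ts (Suc k)) \<longrightarrow> ts n \<le> T \<longrightarrow>
        prob_space.indep_vars M (\<lambda>_. borel)
          (\<lambda>(i, k) \<omega>. W i (ts (Suc k)) \<omega> - W i (ts k) \<omega>) ({..<d} \<times> {..<n}) \<and>
        (\<forall>i<d. \<forall>k<n. distributed M lborel (\<lambda>\<omega>. W i (ts (Suc k)) \<omega> - W i (ts k) \<omega>)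
           (\<lambda>x. ennreal (normal_density 0 (sqrt (ts (Suc k) - ts k)) x))))"

definition aug_filtration :: "'a measure \<Rightarrow> nat \<Rightarrow> (nat \<Rightarrow> real \<Rightarrow> 'a \<Rightarrow> real) \<Rightarrow> real \<Rightarrow> 'a measure" where
  "aug_filtration M d W t = sigma (space M)
     ({W i s -` B \<inter> space M | i s B. i < d \<and> 0 \<le> s \<and> s \<le> t \<and> B \<in> sets borel} \<union> null_sets M)"

definition rho :: "'a measure \<Rightarrow> 'a measure \<Rightarrow> real \<Rightarrow> real \<Rightarrow> real \<Rightarrow> ('a \<Rightarrow> real) \<Rightarrow> 'a \<Rightarrow> ereal" where
  "rho M Ft \<beta> q \<alpha> X \<omega> =
     lnq q (nn_cond_exp M Ft (\<lambda>x. ennreal (expq q (max (- (X x + \<beta>)) 0 + \<alpha>))) \<omega>)"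

end

theory Submission
  imports Defs
begin

text \<open>For 0 \<le> q1 \<le> q2 \<le> 1 the map \<phi> = expq q1 \<circ> lnq q2 is concave, so writing
  expq q1 Y = \<phi> (expq q2 Y), the conditional Jensen inequality gives
  E[expq q1 Y | F] \<le> \<phi> (E[expq q2 Y | F]), and applying lnq q1 yields monotonicity in q.
  Concavity of \<phi> is expressed in the coordinate y = lnq q2 z: the ratio of the derivatives of
  expq q1 and expq q2 is nonincreasing. Jensen is proved directly from a supporting line at an
  F-measurable point, which also covers infinite conditional expectations. Monotonicity in \<alpha>
  only uses that expq q, lnq q and conditional expectation are monotone, and for q = 0 and q = 1
  the risk measure reduces to the conditional expectation and to the entropic one.\<close>

lemma expq_base_ge:
  fixes q y :: real
  assumes "q \<le> 1" "-1 \<le> y"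
  shows "q \<le> 1 + (1 - q) * y"
proof -
  have "(1 - q) * -1 \<le> (1 - q) * y" using assms by (intro mult_left_mono) auto
  then show ?thesis by simp
qed

lemma expq_nonneg: "0 \<le> expq q y"
  by (simp add: expq_def)

lemma expq_mono:
  assumes "0 \<le> q" "q \<le> 1" "-1 \<le> y" "y \<le> y'"
  shows "expq q y \<le> expq q y'"
proof (cases "q = 1")
  case False
  have "0 \<le> 1 + (1 - q) * y" using expq_base_ge[of q y] assms by linarith
  moreover have "(1 - q) * y \<le> (1 - q) * y'" using assms by (intro mult_left_mono) auto
  ultimately show ?thesis using False assms by (simp add: expq_def powr_mono2)
qed (simp add: expq_def assms)

lemma expq_continuous_on:
  assumes "0 \<le> q" "q \<le> 1"
  shows "continuous_on {-1..} (expq q)"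
proof (cases "q = 1")
  case False
  have "continuous_on {-1..} (\<lambda>y. (1 + (1 - q) * y) powr (1 / (1 - q)))"
    using order_trans[OF assms(1) expq_base_ge[OF assms(2)]] assms False
    by (intro continuous_on_powr' continuous_intros) auto
  then show ?thesis using False by (simp add: expq_def[abs_def])
qed (simp add: expq_def[abs_def] continuous_on_exp)

lemma lnq_expq:
  assumes "0 \<le> q" "q \<le> 1" "-1 \<le> y"
  shows "lnq q (ennreal (expq q y)) = ereal y"
proof (cases "q = 1")
  case False
  have "0 \<le> 1 + (1 - q) * y" using expq_base_ge[of q y] assms by linarith
  then show ?thesis using False assms by (simp add: lnq_def expq_def powr_powr)
qed (simp add: lnq_def expq_def ln_ennreal_def)

lemma expq_total:
  assumes "0 < q" "q \<le> 1" "expq q (-1) \<le> z"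
  shows "\<exists>y\<ge>-1. expq q y = z"
proof (cases "q = 1")
  case True
  then have "exp (-1) \<le> z" using assms by (simp add: expq_def)
  moreover from this have "0 < z" using exp_gt_zero order.strict_trans2 by blast
  ultimately show ?thesis using True by (intro exI[of _ "ln z"]) (simp add: expq_def ln_ge_iff)
next
  case False
  then have q: "0 < q" "q < 1" using assms by auto
  have z: "q powr (1 / (1 - q)) \<le> z" using assms False by (simp add: expq_def)
  then have "(q powr (1 / (1 - q))) powr (1 - q) \<le> z powr (1 - q)"
    using q by (intro powr_mono2) auto
  then have zq: "q \<le> z powr (1 - q)" using q by (simp add: powr_powr)
  have "0 < q powr (1 / (1 - q))" using q by simp
  then have "0 < z" using z by linarith
  define y where "y = (z powr (1 - q) - 1) / (1 - q)"
  have "1 + (1 - q) * y = z powr (1 - q)" using q by (simp add: y_def)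
  then have "expq q y = z" using q \<open>0 < z\<close> by (simp add: expq_def powr_powr)
  moreover have "-1 \<le> y" using q zq by (simp add: y_def field_simps)
  ultimately show ?thesis by blast
qed

lemma ln_ennreal_mono:
  assumes "y \<le> y'"
  shows "ln_ennreal y \<le> ln_ennreal y'"
proof -
  consider "y' = \<infinity>" | "y = 0" | "0 < y" "y' < \<infinity>"
    by (metis infinity_ennreal_def top.not_eq_extremum zero_less_iff_neq_zero)
  then show ?thesis
  proof cases
    case 3
    then have "0 < enn2real y" "enn2real y \<le> enn2real y'" "y \<noteq> 0" "y' \<noteq> 0" "y \<noteq> \<infinity>"
      using assms by (auto simp: enn2real_positive_iff enn2real_mono)
    then show ?thesis using 3 by (simp add: ln_ennreal_def)
  qed (simp_all add: ln_ennreal_def)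
qed

lemma lnq_mono:
  assumes "q \<le> 1" "y \<le> y'"
  shows "lnq q y \<le> lnq q y'"
proof (cases "q = 1 \<or> y' = \<infinity>")
  case True
  then show ?thesis using ln_ennreal_mono[OF assms(2)] by (auto simp: lnq_def)
next
  case False
  then have "y < \<infinity>" "y' < \<infinity>" using assms(2) by (auto simp: top.not_eq_extremum)
  then have "enn2real y powr (1 - q) \<le> enn2real y' powr (1 - q)"
    using assms by (intro powr_mono2) (auto simp: enn2real_mono)
  then show ?thesis using False assms \<open>y < \<infinity>\<close> by (simp add: lnq_def divide_right_mono)
qed

lemma expq_measurable [measurable]: "expq q \<in> borel_measurable borel"
  unfolding expq_def by measurable

lemma lnq_measurable [measurable]: "lnq q \<in> borel_measurable borel"
  unfolding lnq_def ln_ennreal_def by measurable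

section \<open>Relative concavity of q-exponentials\<close>

text \<open>This is q * ln (expq q y), the logarithm of the derivative (expq q y) powr q of expq q.\<close>

definition expq_log_deriv :: "real \<Rightarrow> real \<Rightarrow> real" where
  "expq_log_deriv q y = (if q = 1 then y else q / (1 - q) * ln (1 + (1 - q) * y))"

lemma expq_log_deriv_measurable [measurable]: "expq_log_deriv q \<in> borel_measurable borel"
  unfolding expq_log_deriv_def by measurable

lemma expq_has_real_derivative:
  assumes "0 \<le> q" "q \<le> 1" "-1 < y"
  shows "(expq q has_real_derivative exp (expq_log_deriv q y)) (at y)"
proof (cases "q = 1")
  case True
  then show ?thesis by (simp add: expq_def[abs_def] expq_log_deriv_def)
next
  case False
  then have q: "q < 1" using assms by simp
  have "(1 - q) * -1 < (1 - q) * y" using q assms by (intro mult_strict_left_mono) auto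
  then have b: "0 < 1 + (1 - q) * y" using assms by simp
  have "((\<lambda>y. (1 + (1 - q) * y) powr (1 / (1 - q))) has_real_derivative
      1 / (1 - q) * (1 + (1 - q) * y) powr (1 / (1 - q) - 1) * (1 - q)) (at y)"
    using b by (auto intro!: derivative_eq_intros)
  moreover have "1 / (1 - q) - 1 = q / (1 - q)" using q by (simp add: field_simps)
  ultimately show ?thesis using q b by (simp add: expq_def[abs_def] expq_log_deriv_def powr_def)
qed

lemma expq_log_deriv_has_real_derivative:
  assumes "0 \<le> q" "q \<le> 1" "-1 \<le> y"
  shows "(expq_log_deriv q has_real_derivative q / (1 + (1 - q) * y)) (at y)"
proof -
  consider "q = 0" | "q = 1" | "0 < q" "q < 1" using assms by linarith
  then show ?thesis
  proof cases
    case 1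
    then show ?thesis by (simp add: expq_log_deriv_def[abs_def])
  next
    case 2
    then show ?thesis by (simp add: expq_log_deriv_def[abs_def])
  next
    case 3
    have b: "0 < 1 + (1 - q) * y" using expq_base_ge[of q y] 3 assms by linarith
    have "((\<lambda>y. q / (1 - q) * ln (1 + (1 - q) * y)) has_real_derivative
        q / (1 - q) * ((1 - q) / (1 + (1 - q) * y))) (at y)"
      using b by (auto intro!: derivative_eq_intros)
    then show ?thesis using 3 by (simp add: expq_log_deriv_def[abs_def])
  qed
qed

lemma expq_log_deriv_diff_antimono:
  assumes "0 \<le> q1" "q1 \<le> q2" "q2 \<le> 1" "-1 \<le> y" "y \<le> y'"
  shows "expq_log_deriv q1 y' - expq_log_deriv q2 y' \<le> expq_log_deriv q1 y - expq_log_deriv q2 y"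
proof (rule DERIV_nonpos_imp_nonincreasing[OF assms(5)])
  fix x assume x: "y \<le> x" "x \<le> y'"
  define b1 b2 where "b1 = 1 + (1 - q1) * x" and "b2 = 1 + (1 - q2) * x"
  have "0 \<le> b1" "q2 \<le> b2" using expq_base_ge[of q1 x] expq_base_ge[of q2 x] assms x
    by (auto simp: b1_def b2_def)
  moreover have "q1 * b2 \<le> q2 * b1"
  proof -
    have "q2 * b1 - q1 * b2 = (q2 - q1) * (1 + x)" by (simp add: b1_def b2_def algebra_simps)
    also have "\<dots> \<ge> 0" using assms x by simp
    finally show ?thesis by simp
  qed
  ultimately have "q1 / b1 \<le> q2 / b2"
    using assms by (cases "b1 = 0"; cases "q2 = 0") (simp_all add: frac_le_eq divide_nonpos_pos)
  moreover have "((\<lambda>x. expq_log_deriv q1 x - expq_log_deriv q2 x) has_real_derivative q1 / b1 - q2 / b2) (at x)"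
    unfolding b1_def b2_def using assms x
    by (intro DERIV_diff expq_log_deriv_has_real_derivative) auto
  ultimately show "\<exists>z. ((\<lambda>x. expq_log_deriv q1 x - expq_log_deriv q2 x) has_real_derivative z) (at x) \<and> z \<le> 0"
    by force
qed

lemma le_at_derivative_sign_change:
  fixes h h' :: "real \<Rightarrow> real"
  assumes "continuous_on {min y y0..max y y0} h"
    and "\<And>x. min y y0 < x \<Longrightarrow> x < max y y0 \<Longrightarrow> (h has_real_derivative h' x) (at x)"
    and "\<And>x. min y y0 < x \<Longrightarrow> x < y0 \<Longrightarrow> 0 \<le> h' x"
    and "\<And>x. y0 < x \<Longrightarrow> x < max y y0 \<Longrightarrow> h' x \<le> 0"
  shows "h y \<le> h y0"
proof (cases "y \<le> y0")
  case True
  show ?thesis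
  proof (rule DERIV_nonneg_imp_increasing_open[OF True])
    show "continuous_on {y..y0} h" using assms(1) True by (simp add: min_def max_def)
    fix x assume "y < x" "x < y0"
    then show "\<exists>z. (h has_real_derivative z) (at x) \<and> 0 \<le> z"
      using assms(2,3) True by (metis max.absorb2 min.absorb1)
  qed
next
  case False
  show ?thesis
  proof (rule DERIV_nonpos_imp_decreasing_open[of y0 y])
    show "y0 \<le> y" "continuous_on {y0..y} h" using assms(1) False by (simp_all add: min_def max_def)
    fix x assume "y0 < x" "x < y"
    then show "\<exists>z. (h has_real_derivative z) (at x) \<and> z \<le> 0"
      using assms(2,4) False by (metis linorder_le_cases max.absorb1 min.absorb2)
  qed
qed

text \<open>c is the slope at expq q2 y0 of the concave map expq q1 \<circ> lnq q2; the inequality is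
  its supporting line there, written in the coordinate y = lnq q2 z.\<close>

lemma expq_tangent_le:
  assumes q: "0 \<le> q1" "q1 \<le> q2" "q2 \<le> 1" and y: "-1 \<le> y" "-1 \<le> y0"
  defines "c \<equiv> exp (expq_log_deriv q1 y0 - expq_log_deriv q2 y0)"
  shows "expq q1 y + c * expq q2 y0 \<le> expq q1 y0 + c * expq q2 y"
proof -
  define L where "L x = expq_log_deriv q1 x - expq_log_deriv q2 x" for x
  define h' where "h' x = exp (expq_log_deriv q2 x) * (exp (L x) - c)" for x
  have "expq q1 y - c * expq q2 y \<le> expq q1 y0 - c * expq q2 y0"
  proof (rule le_at_derivative_sign_change[where h = "\<lambda>y. expq q1 y - c * expq q2 y" and h' = h'])
    have "{min y y0..max y y0} \<subseteq> {-1..}" using y by auto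
    then show "continuous_on {min y y0..max y y0} (\<lambda>y. expq q1 y - c * expq q2 y)"
      using q by (intro continuous_intros continuous_on_subset[OF expq_continuous_on]) auto
  next
    fix x assume "min y y0 < x" "x < max y y0"
    then have "-1 < x" using y by linarith
    then have "((\<lambda>y. expq q1 y - c * expq q2 y) has_real_derivative
        exp (expq_log_deriv q1 x) - c * exp (expq_log_deriv q2 x)) (at x)"
      using q by (intro DERIV_diff DERIV_cmult expq_has_real_derivative) auto
    then show "((\<lambda>y. expq q1 y - c * expq q2 y) has_real_derivative h' x) (at x)"
      by (simp add: h'_def L_def exp_diff algebra_simps)
  next
    fix x assume "min y y0 < x" "x < y0"
    then have "L y0 \<le> L x" unfolding L_def using q y by (intro expq_log_deriv_diff_antimono) auto
    then show "0 \<le> h' x" by (simp add: h'_def c_def L_def)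
  next
    fix x assume "y0 < x" "x < max y y0"
    then have "L x \<le> L y0" unfolding L_def using q y by (intro expq_log_deriv_diff_antimono) auto
    then show "h' x \<le> 0" by (simp add: h'_def c_def L_def mult_nonneg_nonpos)
  qed
  then show ?thesis by simp
qed

context sigma_finite_subalgebra
begin

lemma nn_cond_exp_ge_const:
  assumes [measurable]: "f \<in> borel_measurable M" and "\<And>x. x \<in> space M \<Longrightarrow> a \<le> f x"
  shows "AE x in M. a \<le> nn_cond_exp M F f x"
proof -
  have "AE x in M. nn_cond_exp M F (\<lambda>_. a) x \<le> nn_cond_exp M F f x"
    by (rule nn_cond_exp_mono) (auto simp: assms(2))
  moreover have "AE x in M. a = nn_cond_exp M F (\<lambda>_. a) x"
    by (rule nn_cond_exp_F_meas) simp
  ultimately show ?thesis by eventually_elim simp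
qed

lemma nn_cond_exp_affine_bound:
  assumes [measurable]: "U \<in> borel_measurable M" "Z \<in> borel_measurable M"
    "a \<in> borel_measurable F" "b \<in> borel_measurable F" "c \<in> borel_measurable F"
    and bound: "\<And>x. x \<in> space M \<Longrightarrow> U x + a x \<le> b x + c x * Z x"
  shows "AE x in M. nn_cond_exp M F U x + a x \<le> b x + c x * nn_cond_exp M F Z x"
proof -
  have [measurable]: "a \<in> borel_measurable M" "b \<in> borel_measurable M" "c \<in> borel_measurable M"
    by (rule measurable_from_subalg[OF subalg], measurable)+
  have "AE x in M. nn_cond_exp M F (\<lambda>x. U x + a x) x \<le> nn_cond_exp M F (\<lambda>x. b x + c x * Z x) x"
    by (rule nn_cond_exp_mono) (auto simp: bound)
  moreover have "AE x in M. nn_cond_exp M F U x + nn_cond_exp M F a x = nn_cond_exp M F (\<lambda>x. U x + a x) x"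
    by (rule nn_cond_exp_sum) measurable
  moreover have "AE x in M. nn_cond_exp M F b x + nn_cond_exp M F (\<lambda>x. c x * Z x) x
      = nn_cond_exp M F (\<lambda>x. b x + c x * Z x) x"
    by (rule nn_cond_exp_sum) measurable
  moreover have "AE x in M. a x = nn_cond_exp M F a x" "AE x in M. b x = nn_cond_exp M F b x"
    by (rule nn_cond_exp_F_meas, measurable)+
  moreover have "AE x in M. c x * nn_cond_exp M F Z x = nn_cond_exp M F (\<lambda>x. c x * Z x) x"
    by (rule nn_cond_exp_prod) measurable
  ultimately show ?thesis by eventually_elim simp
qed

lemma lnq_cond_exp_expq_mono:
  assumes q: "q \<le> 1" "0 \<le> q" and [measurable]: "Y1 \<in> borel_measurable M" "Y2 \<in> borel_measurable M"
    and Y: "\<And>x. -1 \<le> Y1 x" "\<And>x. Y1 x \<le> Y2 x"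
  shows "AE x in M. lnq q (nn_cond_exp M F (\<lambda>x. ennreal (expq q (Y1 x))) x)
                   \<le> lnq q (nn_cond_exp M F (\<lambda>x. ennreal (expq q (Y2 x))) x)"
proof -
  have "AE x in M. nn_cond_exp M F (\<lambda>x. ennreal (expq q (Y1 x))) x
                 \<le> nn_cond_exp M F (\<lambda>x. ennreal (expq q (Y2 x))) x"
    using q Y by (intro nn_cond_exp_mono AE_I2 ennreal_leI expq_mono) auto
  then show ?thesis by eventually_elim (rule lnq_mono[OF q(1)])
qed

lemma lnq_cond_exp_expq_mono_q:
  assumes q: "0 \<le> q1" "q1 \<le> q2" "q2 \<le> 1"
    and [measurable]: "Y \<in> borel_measurable M" and Y: "\<And>x. -1 \<le> Y x"
  shows "AE x in M. lnq q1 (nn_cond_exp M F (\<lambda>x. ennreal (expq q1 (Y x))) x)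
                   \<le> lnq q2 (nn_cond_exp M F (\<lambda>x. ennreal (expq q2 (Y x))) x)"
proof (cases "q1 = q2")
  case False
  then have "0 < q2" using q by linarith
  define z0 where "z0 = nn_cond_exp M F (\<lambda>x. ennreal (expq q2 (Y x)))"
  \<comment> \<open>clipped at -1 so that the supporting line exists at every point, also where z0 is infinite\<close>
  define y0 where "y0 x = max (-1) (real_of_ereal (lnq q2 (z0 x)))" for x
  define c where "c x = exp (expq_log_deriv q1 (y0 x) - expq_log_deriv q2 (y0 x))" for x
  have y0: "-1 \<le> y0 x" for x by (simp add: y0_def)
  have [measurable]: "y0 \<in> borel_measurable F" "c \<in> borel_measurable F"
    unfolding z0_def y0_def c_def by measurable
  have "AE x in M. nn_cond_exp M F (\<lambda>x. ennreal (expq q1 (Y x))) x + ennreal (c x * expq q2 (y0 x))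
                 \<le> ennreal (expq q1 (y0 x)) + ennreal (c x) * z0 x"
    unfolding z0_def
  proof (rule nn_cond_exp_affine_bound)
    fix x
    have "expq q1 (Y x) + c x * expq q2 (y0 x) \<le> expq q1 (y0 x) + c x * expq q2 (Y x)"
      unfolding c_def using q Y y0 by (rule expq_tangent_le)
    then have "ennreal (expq q1 (Y x) + c x * expq q2 (y0 x))
             \<le> ennreal (expq q1 (y0 x) + c x * expq q2 (Y x))"
      by (rule ennreal_leI)
    then show "ennreal (expq q1 (Y x)) + ennreal (c x * expq q2 (y0 x))
             \<le> ennreal (expq q1 (y0 x)) + ennreal (c x) * ennreal (expq q2 (Y x))"
      by (simp add: expq_nonneg c_def ennreal_mult)
  qed measurable
  moreover have "AE x in M. ennreal (expq q2 (-1)) \<le> z0 x"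
    unfolding z0_def using q Y by (intro nn_cond_exp_ge_const ennreal_leI expq_mono) auto
  ultimately show ?thesis
  proof eventually_elim
    case (elim x)
    show ?case
    proof (cases "z0 x = \<infinity>")
      case True
      then show ?thesis by (simp add: z0_def lnq_def ln_ennreal_def)
    next
      case False
      then obtain z where z: "z0 x = ennreal z" "expq q2 (-1) \<le> z"
        using elim(2) expq_nonneg by (cases "z0 x") auto
      then obtain y where y: "-1 \<le> y" "expq q2 y = z"
        using expq_total \<open>0 < q2\<close> q by blast
      then have "lnq q2 (z0 x) = ereal y" using lnq_expq[of q2 y] q z by simp
      then have "y0 x = y" using y by (simp add: y0_def)
      have "ennreal (c x) * z0 x = ennreal (c x * z)"
        using z y expq_nonneg[of q2 y] by (simp add: c_def ennreal_mult)
      then have "nn_cond_exp M F (\<lambda>x. ennreal (expq q1 (Y x))) x + ennreal (c x * z)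
               \<le> ennreal (expq q1 y) + ennreal (c x * z)"
        using elim(1) unfolding \<open>y0 x = y\<close> y(2) by simp
      then have "nn_cond_exp M F (\<lambda>x. ennreal (expq q1 (Y x))) x \<le> ennreal (expq q1 y)"
        by simp
      then have "lnq q1 (nn_cond_exp M F (\<lambda>x. ennreal (expq q1 (Y x))) x) \<le> ereal y"
        using lnq_mono[of q1] lnq_expq[of q1 y] q y by fastforce
      with \<open>lnq q2 (z0 x) = ereal y\<close> show ?thesis by (simp add: z0_def)
    qed
  qed
qed simp

end

context finite_measure_subalgebra
begin

lemma nn_cond_exp_eq_real_cond_exp:
  assumes f: "integrable M f" "\<And>x. 0 \<le> f x"
  shows "AE x in M. nn_cond_exp M F (\<lambda>x. ennreal (f x)) x = ennreal (real_cond_exp M F f x)"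
proof -
  have [measurable]: "f \<in> borel_measurable M" using f by auto
  have "(\<integral>\<^sup>+ x. nn_cond_exp M F (\<lambda>x. ennreal (f x)) x \<partial>M) = (\<integral>\<^sup>+ x. ennreal (f x) \<partial>M)"
    using nn_cond_exp_intg[of "\<lambda>_. 1" "\<lambda>x. ennreal (f x)"] by simp
  then have "AE x in M. nn_cond_exp M F (\<lambda>x. ennreal (f x)) x \<noteq> \<infinity>"
    using integrableD(2)[OF f(1)] by (intro nn_integral_PInf_AE) auto
  moreover have "(\<lambda>x. ennreal (- f x)) = (\<lambda>_. 0)" using f by (simp add: ennreal_neg)
  then have "AE x in M. 0 = nn_cond_exp M F (\<lambda>x. ennreal (- f x)) x"
    using nn_cond_exp_F_meas[of "\<lambda>_. 0"] by simp
  ultimately show ?thesis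
    by eventually_elim (simp add: real_cond_exp_def top.not_eq_extremum)
qed

lemma real_cond_exp_eq_lnq_0:
  assumes Y: "integrable M Y" "\<And>x. -1 \<le> Y x"
  shows "AE x in M. ereal (real_cond_exp M F Y x)
                   = lnq 0 (nn_cond_exp M F (\<lambda>x. ennreal (expq 0 (Y x))) x)"
proof -
  have [measurable]: "Y \<in> borel_measurable M" using Y by auto
  have Y1: "0 \<le> 1 + Y x" for x using Y(2)[of x] by simp
  then have expq_0: "expq 0 (Y x) = 1 + Y x" for x by (simp add: expq_def)
  have "AE x in M. nn_cond_exp M F (\<lambda>x. ennreal (1 + Y x)) x = ennreal (real_cond_exp M F (\<lambda>x. 1 + Y x) x)"
    using Y Y1 by (intro nn_cond_exp_eq_real_cond_exp) auto
  moreover have "AE x in M. 0 \<le> real_cond_exp M F (\<lambda>x. 1 + Y x) x"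
    using Y1 by (intro real_cond_exp_pos AE_I2) auto
  moreover have "AE x in M. real_cond_exp M F (\<lambda>x. 1 + Y x) x = real_cond_exp M F (\<lambda>_. 1) x + real_cond_exp M F Y x"
    using Y by (intro real_cond_exp_add) auto
  moreover have "AE x in M. real_cond_exp M F (\<lambda>_. 1) x = 1"
    by (intro real_cond_exp_F_meas) auto
  ultimately show ?thesis
    by eventually_elim (simp add: expq_0 lnq_def)
qed

end

lemma subalgebra_aug_filtration:
  assumes BM: "brownian_motion M d T W" and "s \<le> T"
  shows "subalgebra M (aug_filtration M d W s)"
proof -
  define G where "G = {W i r -` B \<inter> space M | i r B. i < d \<and> 0 \<le> r \<and> r \<le> s \<and> B \<in> sets borel}"
  have "W i r \<in> borel_measurable M" if "i < d" "0 \<le> r" "r \<le> s" for i r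
    using BM that \<open>s \<le> T\<close> unfolding brownian_motion_def by auto
  then have "G \<union> null_sets M \<subseteq> sets M" unfolding G_def by auto
  moreover from this have "G \<union> null_sets M \<subseteq> Pow (space M)" using sets.sets_into_space by blast
  moreover have "aug_filtration M d W s = sigma (space M) (G \<union> null_sets M)"
    unfolding aug_filtration_def G_def ..
  ultimately show ?thesis unfolding subalgebra_def by (simp add: sets.sigma_sets_subset)
qed

context sigma_finite_subalgebra
begin

lemma rho_mono_q:
  assumes [measurable]: "X \<in> borel_measurable M" and "-1 \<le> \<alpha>" "0 \<le> q1" "q1 \<le> q2" "q2 \<le> 1"
  shows "AE \<omega> in M. rho M F \<beta> q1 \<alpha> X \<omega> \<le> rho M F \<beta> q2 \<alpha> X \<omega>"
  unfolding rho_def using assms by (intro lnq_cond_exp_expq_mono_q) auto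

lemma rho_mono_alpha:
  assumes [measurable]: "X \<in> borel_measurable M" and "0 \<le> q" "q \<le> 1" "-1 \<le> \<alpha>1" "\<alpha>1 \<le> \<alpha>2"
  shows "AE \<omega> in M. rho M F \<beta> q \<alpha>1 X \<omega> \<le> rho M F \<beta> q \<alpha>2 X \<omega>"
  unfolding rho_def using assms by (intro lnq_cond_exp_expq_mono) auto

end

lemma (in finite_measure_subalgebra) real_cond_exp_eq_rho_0:
  assumes "integrable M X" "-1 \<le> \<alpha>"
  shows "AE \<omega> in M. ereal (real_cond_exp M F (\<lambda>x. max (- (X x + \<beta>)) 0 + \<alpha>) \<omega>) = rho M F \<beta> 0 \<alpha> X \<omega>"
  unfolding rho_def using assms by (intro real_cond_exp_eq_lnq_0) auto

lemma rho_1_eq_ln_cond_exp_exp: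
  "rho M F \<beta> 1 \<alpha> X \<omega> = ln_ennreal (nn_cond_exp M F (\<lambda>x. ennreal (exp (max (- (X x + \<beta>)) 0 + \<alpha>))) \<omega>)"
  by (simp add: rho_def expq_def lnq_def)

theorem mainTheorem7:
  fixes M :: "'a measure" and d :: nat and T t u \<beta> :: real
    and W :: "nat \<Rightarrow> real \<Rightarrow> 'a \<Rightarrow> real" and X :: "'a \<Rightarrow> real"
  defines "F \<equiv> aug_filtration M d W"
  assumes BM: "brownian_motion M d T W" and d: "d \<ge> 1"
    and tu: "0 \<le> t" "t \<le> u" "u \<le> T"
    and X_meas: "X \<in> borel_measurable (F u)"
    and X_L2: "integrable M (\<lambda>\<omega>. (X \<omega>)\<^sup>2)"
    and \<beta>: "\<beta> \<ge> 0"
  shows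
    "(\<forall>\<alpha> q1 q2. \<alpha> \<ge> -1 \<and> 0 \<le> q1 \<and> q1 \<le> q2 \<and> q2 \<le> 1 \<longrightarrow>
        (AE \<omega> in M. rho M (F t) \<beta> q1 \<alpha> X \<omega> \<le> rho M (F t) \<beta> q2 \<alpha> X \<omega>))
   \<and> (\<forall>q \<alpha>1 \<alpha>2. 0 \<le> q \<and> q \<le> 1 \<and> -1 \<le> \<alpha>1 \<and> \<alpha>1 \<le> \<alpha>2 \<longrightarrow>
        (AE \<omega> in M. rho M (F t) \<beta> q \<alpha>1 X \<omega> \<le> rho M (F t) \<beta> q \<alpha>2 X \<omega>))
   \<and> (\<forall>q \<alpha>0 \<alpha>q \<alpha>1. 0 < q \<and> q < 1 \<and> -1 \<le> \<alpha>0 \<and> \<alpha>0 \<le> \<alpha>q \<and> \<alpha>q \<le> \<alpha>1 \<longrightarrow>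
        (AE \<omega> in M.
           ereal (real_cond_exp M (F t) (\<lambda>x. max (- (X x + \<beta>)) 0 + \<alpha>0) \<omega>) = rho M (F t) \<beta> 0 \<alpha>0 X \<omega>
         \<and> rho M (F t) \<beta> 0 \<alpha>0 X \<omega> \<le> rho M (F t) \<beta> q \<alpha>q X \<omega>
         \<and> rho M (F t) \<beta> q \<alpha>q X \<omega> \<le> rho M (F t) \<beta> 1 \<alpha>1 X \<omega>
         \<and> rho M (F t) \<beta> 1 \<alpha>1 X \<omega>
             = ln_ennreal (nn_cond_exp M (F t) (\<lambda>x. ennreal (exp (max (- (X x + \<beta>)) 0 + \<alpha>1))) \<omega>)))"
proof -
  interpret prob_space M using BM by (simp add: brownian_motion_def)
  interpret finite_measure_subalgebra M "F t"
    using subalgebra_aug_filtration[OF BM] tu by unfold_locales (simp add: F_def)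
  have [measurable]: "X \<in> borel_measurable M"
    using measurable_from_subalg subalgebra_aug_filtration[OF BM tu(3)] X_meas by (auto simp: F_def)
  have "integrable M X" by (rule square_integrable_imp_integrable[OF _ X_L2]) simp
  show ?thesis
  proof (intro conjI allI impI, goal_cases)
    case (1 \<alpha> q1 q2)
    then show ?case by (intro rho_mono_q) auto
  next
    case (2 q \<alpha>1 \<alpha>2)
    then show ?case by (intro rho_mono_alpha) auto
  next
    case (3 q \<alpha>0 \<alpha>q \<alpha>1)
    then have "AE \<omega> in M. rho M (F t) \<beta> 0 \<alpha>0 X \<omega> \<le> rho M (F t) \<beta> q \<alpha>0 X \<omega>"
      "AE \<omega> in M. rho M (F t) \<beta> q \<alpha>0 X \<omega> \<le> rho M (F t) \<beta> q \<alpha>q X \<omega>"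
      "AE \<omega> in M. rho M (F t) \<beta> q \<alpha>q X \<omega> \<le> rho M (F t) \<beta> 1 \<alpha>q X \<omega>"
      "AE \<omega> in M. rho M (F t) \<beta> 1 \<alpha>q X \<omega> \<le> rho M (F t) \<beta> 1 \<alpha>1 X \<omega>"
      by (intro rho_mono_q rho_mono_alpha; simp)+
    moreover have "AE \<omega> in M. ereal (real_cond_exp M (F t) (\<lambda>x. max (- (X x + \<beta>)) 0 + \<alpha>0) \<omega>)
                             = rho M (F t) \<beta> 0 \<alpha>0 X \<omega>"
      using 3 \<open>integrable M X\<close> by (intro real_cond_exp_eq_rho_0) auto
    ultimately show ?case
      by eventually_elim (simp only: rho_1_eq_ln_cond_exp_exp simp_thms, meson order.trans)
  qed
qed

end
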